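(* Let $\chi>0$, $\phi\in C^1(\mathbb{R})$ with $\phi'>0$, $\phi(0)>0$, $s>\chi\phi(0)$, $u_-\ge0$, and let $g\in C^1([0,\infty))$ be positive with exactly one $\beta>0$ such that $g'<0$ on $[0,\beta)$ and $g'>0$ on $(\beta,\infty)$; let $g_\infty:=\lim_{V\to\infty}g(V)\in(0,\infty]$. Consider equilibria $(V,0)$, $V\ge0$, of $V'=W$, $W'=-h(W)+g(V)$, $h(W)=\frac{u_-(\chi\phi(0)-s)}{\chi\phi(W)-s}$. (1) If $g_\infty<g(0)$: (i) if $u_-<g(\beta)$ or $u_->g(0)$ there is no equilibrium; (ii) if $u_-=g(\beta)$ or $g_\infty<u_-<g(0)$ there is exactly one equilibrium $E=(v,0)$, with $v\le\beta$, and $E$ is a stable focus, a stable node, or non-hyperbolic; (iii) if $g(\beta)<u_-<g_\infty$ there are exactly two equilibria $E_\pm=(v_\pm,0)$ with $0<v_+<\beta<v_-$, $u_-=g(v_\pm)$, $E_-$ a saddle and $E_+$ a stable focus or stable node. (2) If $g_\infty>g(0)$ (including $g_\infty=+\infty$): (i) if $u_-<g(\beta)$ or $u_-\ge g_\infty$ there is no equilibrium; (ii) if $u_-=g(\beta)$ or $g(0)<u_-<g_\infty$ there is exactly one equilibrium $E=(v,0)$, with $v\ge\beta$, and $E$ is a saddle or non-hyperbolic; (iii) if $g(\beta)<u_-\le g(0)$ there are exactly two equilibria $E_\pm=(v_\pm,0)$ with $0\le v_+<\beta<v_-$, $u_-=g(v_\pm)$, $E_-$ a saddle and $E_+$ a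 stable focus or stable node. (3) If $g_\infty=g(0)$: (i) if $u_-<g(\beta)$ or $u_->g(0)$ there is no equilibrium; (ii) if $u_-=g(\beta)$ there is exactly one equilibrium $E=(\beta,0)$, and it is non-hyperbolic; (iii) if $g(\beta)<u_-<g(0)$ there are exactly two equilibria $E_\pm=(v_\pm,0)$ with $0<v_+<\beta<v_-$, $u_-=g(v_\pm)$, $E_-$ a saddle and $E_+$ a stable focus or stable node. *)

theory Defs
  imports Complex_Main "HOL-Library.Extended_Real"
begin

definition hfun :: "real \<Rightarrow> real \<Rightarrow> (real \<Rightarrow> real) \<Rightarrow> real \<Rightarrow> real \<Rightarrow> real" where
  "hfun um chi phi s W = um * (chi * phi 0 - s) / (chi * phi W - s)"

definition F1 :: "real \<Rightarrow> real \<Rightarrow> real" where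
  "F1 V W = W"

definition F2 :: "(real \<Rightarrow> real) \<Rightarrow> real \<Rightarrow> real \<Rightarrow> (real \<Rightarrow> real) \<Rightarrow> real \<Rightarrow> real \<Rightarrow> real \<Rightarrow> real" where
  "F2 g um chi phi s V W = - hfun um chi phi s W + g V"

definition equilibria :: "(real \<Rightarrow> real \<Rightarrow> real) \<Rightarrow> (real \<Rightarrow> real \<Rightarrow> real) \<Rightarrow> (real \<times> real) set" where
  "equilibria P Q = {(V, W). V \<ge> 0 \<and> P V W = 0 \<and> Q V W = 0}"

text \<open>Jacobian matrix ((a,b),(c,d)) of (P,Q) at (v,w); derivatives in V are taken
  within the phase region V >= 0 (one-sided at V = 0).\<close>
definition has_jacobian_at ::
  "(real \<Rightarrow> real \<Rightarrow> real) \<Rightarrow> (real \<Rightarrow> real \<Rightarrow> real) \<Rightarrow> real \<Rightarrow> real \<Rightarrow> real \<times> real \<times> real \<times> real \<Rightarrow> bool" where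
  "has_jacobian_at P Q v w J \<longleftrightarrow>
     (case J of (a, b, c, d) \<Rightarrow>
        ((\<lambda>x. P x w) has_real_derivative a) (at v within {0..}) \<and>
        ((\<lambda>y. P v y) has_real_derivative b) (at w) \<and>
        ((\<lambda>x. Q x w) has_real_derivative c) (at v within {0..}) \<and>
        ((\<lambda>y. Q v y) has_real_derivative d) (at w))"

definition eigs2 :: "real \<times> real \<times> real \<times> real \<Rightarrow> complex set" where
  "eigs2 J = (case J of (a, b, c, d) \<Rightarrow>
     {z. (z - complex_of_real a) * (z - complex_of_real d) - complex_of_real b * complex_of_real c = 0})"

definition saddle_mat :: "real \<times> real \<times> real \<times> real \<Rightarrow> bool" where
  "saddle_mat J \<longleftrightarrow> (\<exists>l1\<in>eigs2 J. \<exists>l2\<in>eigs2 J. Im l1 = 0 \<and> Im l2 = 0 \<and> Re l1 < 0 \<and> 0 < Re l2)"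

definition stable_node_mat :: "real \<times> real \<times> real \<times> real \<Rightarrow> bool" where
  "stable_node_mat J \<longleftrightarrow> (\<forall>l\<in>eigs2 J. Im l = 0 \<and> Re l < 0)"

definition stable_focus_mat :: "real \<times> real \<times> real \<times> real \<Rightarrow> bool" where
  "stable_focus_mat J \<longleftrightarrow> (\<forall>l\<in>eigs2 J. Im l \<noteq> 0 \<and> Re l < 0)"

definition nonhyperbolic_mat :: "real \<times> real \<times> real \<times> real \<Rightarrow> bool" where
  "nonhyperbolic_mat J \<longleftrightarrow> (\<exists>l\<in>eigs2 J. Re l = 0)"

definition eq_kind ::
  "(real \<times> real \<times> real \<times> real \<Rightarrow> bool) \<Rightarrow> (real \<Rightarrow> real \<Rightarrow> real) \<Rightarrow> (real \<Rightarrow> real \<Rightarrow> real) \<Rightarrow> real \<times> real \<Rightarrow> bool" where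
  "eq_kind K P Q p \<longleftrightarrow> (\<exists>J. has_jacobian_at P Q (fst p) (snd p) J \<and> K J)"

end

theory Submission
  imports Defs
begin

text \<open>Since h(0) = u_-, the equilibria are the points (v, 0) with v \<ge> 0 and g(v) = u_-.
  The function g decreases strictly on [0, beta] and increases strictly on [beta, \<infinity>)
  towards its supremum g_\<infinity>, so u_- is attained once on the left branch if
  g(beta) \<le> u_- \<le> g(0) and once on the right branch if g(beta) < u_- < g_\<infinity>.
  At (v, 0) the Jacobian is the companion matrix ((0, 1), (g'(v), d)) with
  d = -h'(0) < 0 (as u_- = g(v) > 0): its determinant -g'(v) makes the right
  branch saddles, the left branch stable nodes or foci, and v = beta non-hyperbolic.\<close>

section \<open>Companion matrices\<close>

lemma eigs2_companion_iff:
  "z \<in> eigs2 (0, 1, c, d) \<longleftrightarrow>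
     (Re z)\<^sup>2 - (Im z)\<^sup>2 - d * Re z - c = 0 \<and> Im z * (2 * Re z - d) = 0"
  by (simp add: eigs2_def complex_eq_iff power2_eq_square algebra_simps)

lemma saddle_mat_companion:
  assumes "c > 0"
  shows "saddle_mat (0, 1, c, d)"
proof -
  define r where "r = sqrt (d\<^sup>2 + 4 * c)"
  have r_sq: "r\<^sup>2 = d\<^sup>2 + 4 * c"
    using assms by (simp add: r_def)
  have "sqrt (d\<^sup>2) < r"
    unfolding r_def using assms by (intro real_sqrt_less_mono) simp
  then have d_r: "\<bar>d\<bar> < r" by simp
  have root: "complex_of_real ((d + e) / 2) \<in> eigs2 (0, 1, c, d)" if "e\<^sup>2 = d\<^sup>2 + 4 * c" for e
    using that by (simp add: eigs2_companion_iff power2_eq_square field_simps)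
  have neg_root: "complex_of_real ((d + - r) / 2) \<in> eigs2 (0, 1, c, d)"
    and pos_root: "complex_of_real ((d + r) / 2) \<in> eigs2 (0, 1, c, d)"
    by (rule root, simp add: r_sq)+
  show ?thesis
    unfolding saddle_mat_def using d_r by (intro bexI[OF _ neg_root] bexI[OF _ pos_root]) auto
qed

lemma nonhyperbolic_mat_companion: "nonhyperbolic_mat (0, 1, 0, d)"
  unfolding nonhyperbolic_mat_def by (rule bexI[of _ 0]) (simp_all add: eigs2_def)

lemma stable_focus_or_node_companion:
  assumes "c < 0" "d < 0"
  shows "stable_focus_mat (0, 1, c, d) \<or> stable_node_mat (0, 1, c, d)"
proof (cases "d\<^sup>2 + 4 * c < 0")
  case True
  have "Im l \<noteq> 0 \<and> Re l < 0" if "l \<in> eigs2 (0, 1, c, d)" for l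
  proof -
    have eq: "(Re l)\<^sup>2 - (Im l)\<^sup>2 - d * Re l - c = 0" "Im l * (2 * Re l - d) = 0"
      using that by (simp_all add: eigs2_companion_iff)
    have "Im l \<noteq> 0"
    proof
      assume "Im l = 0"
      with eq(1) have "(2 * Re l - d)\<^sup>2 = d\<^sup>2 + 4 * c"
        by (simp add: power2_eq_square algebra_simps)
      with True show False by (metis zero_le_power2 not_le)
    qed
    with eq(2) assms show ?thesis by simp
  qed
  then show ?thesis unfolding stable_focus_mat_def by blast
next
  case False
  have "Im l = 0 \<and> Re l < 0" if "l \<in> eigs2 (0, 1, c, d)" for l
  proof -
    have eq: "(Re l)\<^sup>2 - (Im l)\<^sup>2 - d * Re l - c = 0" "Im l * (2 * Re l - d) = 0"
      using that by (simp_all add: eigs2_companion_iff)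
    have real: "Im l = 0"
    proof (rule ccontr)
      assume "Im l \<noteq> 0"
      with eq(2) have "2 * Re l = d" by simp
      with eq(1) have "4 * (Im l)\<^sup>2 = - (d\<^sup>2 + 4 * c)"
        by (simp add: power2_eq_square algebra_simps flip: \<open>2 * Re l = d\<close>)
      moreover have "(Im l)\<^sup>2 > 0"
        using \<open>Im l \<noteq> 0\<close> by simp
      ultimately show False
        using False by linarith
    qed
    have "Re l < 0"
    proof (rule ccontr)
      assume "\<not> Re l < 0"
      then have "(Re l)\<^sup>2 - d * Re l - c > 0"
        using assms by (smt (verit) mult_nonpos_nonneg zero_le_power2)
      with eq(1) real show False by simp
    qed
    with real show ?thesis ..
  qed
  then show ?thesis unfolding stable_node_mat_def by blast
qed

section \<open>Functions with a single valley\<close>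

locale valley =
  fixes g :: "real \<Rightarrow> real" and beta :: real
  assumes beta_nonneg: "0 \<le> beta"
    and continuous: "continuous_on {0..} g"
    and decreasing: "strict_antimono_on {0..beta} g"
    and increasing: "strict_mono_on {beta..} g"
begin

definition g_sup :: ereal where
  "g_sup = (SUP v\<in>{beta..}. ereal (g v))"

lemma g_ge_g_beta: "0 \<le> v \<Longrightarrow> g beta \<le> g v"
  using monotone_onD[OF decreasing, of v beta] monotone_onD[OF increasing, of beta v]
  by (cases v beta rule: linorder_cases) auto

lemma g_le_g_0: "0 \<le> v \<Longrightarrow> v \<le> beta \<Longrightarrow> g v \<le> g 0"
  using monotone_onD[OF decreasing, of 0 v] by (cases "v = 0") auto

lemma less_g_sup: "beta \<le> v \<Longrightarrow> ereal (g v) < g_sup"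
proof -
  assume "beta \<le> v"
  then have "g v < g (v + 1)"
    using monotone_onD[OF increasing, of v "v + 1"] by simp
  also have "ereal (g (v + 1)) \<le> g_sup"
    unfolding g_sup_def using \<open>beta \<le> v\<close> by (intro SUP_upper) simp
  finally show ?thesis by simp
qed

lemma tendsto_g_sup: "((\<lambda>v. ereal (g v)) \<longlongrightarrow> g_sup) at_top"
proof (rule order_tendstoI)
  fix a assume "a < g_sup"
  then obtain x where x: "beta \<le> x" "a < ereal (g x)"
    unfolding g_sup_def less_SUP_iff by auto
  show "eventually (\<lambda>v. a < ereal (g v)) at_top"
    using eventually_ge_at_top[of x]
  proof eventually_elim
    case (elim v)
    with x have "g x \<le> g v"
      using monotone_onD[OF increasing, of x v] by (cases "x = v") auto
    with x show ?case by (simp add: order_less_le_trans)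
  qed
next
  fix b assume "g_sup < b"
  show "eventually (\<lambda>v. ereal (g v) < b) at_top"
    using eventually_ge_at_top[of beta]
    by eventually_elim (use less_g_sup \<open>g_sup < b\<close> in force)
qed

lemma Lim_at_top_eq_g_sup: "Lim at_top (\<lambda>v. ereal (g v)) = g_sup"
  by (rule tendsto_Lim[OF _ tendsto_g_sup]) simp

lemma level_set_left:
  assumes "g beta \<le> c" "c \<le> g 0"
  obtains v where "0 \<le> v" "v \<le> beta" "{w. 0 \<le> w \<and> w \<le> beta \<and> g w = c} = {v}"
proof -
  obtain v where v: "0 \<le> v" "v \<le> beta" "g v = c"
    using IVT2'[of g beta c 0] assms beta_nonneg continuous_on_subset[OF continuous]
    by fastforce
  have "inj_on g {0..beta}"
    using decreasing strict_antimono_iff_antimono by blast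
  with v have "{w. 0 \<le> w \<and> w \<le> beta \<and> g w = c} = {v}"
    by (auto dest: inj_onD)
  with v show ?thesis using that by blast
qed

lemma level_set_right:
  assumes "g beta < c" "ereal c < g_sup"
  obtains v where "beta < v" "{w. beta < w \<and> g w = c} = {v}"
proof -
  obtain x where x: "beta \<le> x" "c < g x"
    using assms(2) unfolding g_sup_def less_SUP_iff by auto
  obtain v where v: "beta \<le> v" "g v = c"
    using IVT'[of g beta c x] assms(1) x beta_nonneg continuous_on_subset[OF continuous]
    by fastforce
  with assms(1) have "beta < v" by (cases "v = beta") auto
  moreover have "inj_on g {beta..}"
    using increasing strict_mono_on_imp_inj_on by blast
  ultimately have "{w. beta < w \<and> g w = c} = {v}"
    using v by (auto dest: inj_onD)
  with \<open>beta < v\<close> show ?thesis using that by blast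
qed

lemma level_set_split:
  "{v. 0 \<le> v \<and> g v = c} = {v. 0 \<le> v \<and> v \<le> beta \<and> g v = c} \<union> {v. beta < v \<and> g v = c}"
  using beta_nonneg by auto

lemma level_set_left_empty: "g 0 < c \<Longrightarrow> {v. 0 \<le> v \<and> v \<le> beta \<and> g v = c} = {}"
  using g_le_g_0 by fastforce

lemma level_set_right_empty:
  assumes "g_sup \<le> ereal c"
  shows "{v. beta < v \<and> g v = c} = {}"
proof -
  have "g v < c" if "beta < v" for v
    using order.strict_trans2[OF less_g_sup assms, of v] that by simp
  then show ?thesis by force
qed

lemma level_set_empty:
  assumes "c < g beta \<or> (g 0 < c \<and> g_sup \<le> ereal c)"
  shows "{v. 0 \<le> v \<and> g v = c} = {}"
  using assms
proof
  assume "c < g beta"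
  then show ?thesis using g_ge_g_beta by force
next
  assume "g 0 < c \<and> g_sup \<le> ereal c"
  then show ?thesis
    unfolding level_set_split using level_set_left_empty level_set_right_empty by simp
qed

lemma level_set_at_min: "{v. 0 \<le> v \<and> g v = g beta} = {beta}"
proof -
  have "v = beta" if "0 \<le> v" "g v = g beta" for v
    using that monotone_onD[OF decreasing, of v beta] monotone_onD[OF increasing, of beta v]
    by (cases v beta rule: linorder_cases) auto
  then show ?thesis using beta_nonneg by auto
qed

lemma level_set_left_only:
  assumes "g beta < c" "c \<le> g 0" "g_sup \<le> ereal c"
  obtains v where "v < beta" "{w. 0 \<le> w \<and> g w = c} = {v}"
proof -
  obtain v where v: "v \<le> beta" "{w. 0 \<le> w \<and> w \<le> beta \<and> g w = c} = {v}"
    using level_set_left[OF less_imp_le[OF assms(1)] assms(2)] by blast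
  have "v \<noteq> beta"
    using v(2) assms(1) by auto
  with v show ?thesis
    using that[of v] unfolding level_set_split level_set_right_empty[OF assms(3)] by simp
qed

lemma level_set_right_only:
  assumes "g 0 < c" "ereal c < g_sup"
  obtains v where "beta < v" "{w. 0 \<le> w \<and> g w = c} = {v}"
proof -
  have "g beta < c"
    using g_ge_g_beta[of 0] assms(1) by simp
  then obtain v where "beta < v" "{w. beta < w \<and> g w = c} = {v}"
    using assms(2) level_set_right by blast
  then show ?thesis
    using that[of v] unfolding level_set_split level_set_left_empty[OF assms(1)] by simp
qed

lemma level_set_two:
  assumes "g beta < c" "c \<le> g 0" "ereal c < g_sup"
  obtains vp vm where "vp < beta" "beta < vm" "{w. 0 \<le> w \<and> g w = c} = {vp, vm}"
proof -
  obtain vp where vp: "vp \<le> beta" "{w. 0 \<le> w \<and> w \<le> beta \<and> g w = c} = {vp}"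
    using level_set_left[OF less_imp_le[OF assms(1)] assms(2)] by blast
  obtain vm where vm: "beta < vm" "{w. beta < w \<and> g w = c} = {vm}"
    using assms(1,3) level_set_right by blast
  have "vp \<noteq> beta"
    using vp(2) assms(1) by auto
  with vp vm show ?thesis
    using that[of vp vm] unfolding level_set_split by (simp add: insert_commute)
qed

end

lemma valley_if_deriv_sign:
  fixes g g' :: "real \<Rightarrow> real"
  assumes "0 \<le> beta"
    and deriv: "\<And>v. 0 \<le> v \<Longrightarrow> (g has_real_derivative g' v) (at v within {0..})"
    and neg: "\<And>v. 0 \<le> v \<Longrightarrow> v < beta \<Longrightarrow> g' v < 0"
    and pos: "\<And>v. beta < v \<Longrightarrow> 0 < g' v"
  shows "valley g beta"
proof unfold_locales
  show cont: "continuous_on {0..} g"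
    unfolding continuous_on_eq_continuous_within using deriv DERIV_continuous by blast
  have deriv_at: "(g has_real_derivative g' v) (at v)" if "0 < v" for v
  proof -
    have "at v within {0..} = at v"
      using that by (intro at_within_open_subset[of v "{0<..}"]) auto
    with deriv[of v] that show ?thesis by simp
  qed
  show "strict_antimono_on {0..beta} g"
  proof (rule monotone_onI)
    fix x y assume xy: "x \<in> {0..beta}" "y \<in> {0..beta}" "x < y"
    show "g y < g x"
    proof (rule DERIV_neg_imp_decreasing_open[OF \<open>x < y\<close>])
      show "\<exists>l. (g has_real_derivative l) (at z) \<and> l < 0" if "x < z" "z < y" for z
        using that xy deriv_at[of z] neg[of z] by auto
      show "continuous_on {x..y} g"
        using xy by (auto intro: continuous_on_subset[OF cont])
    qed
  qed
  show "strict_mono_on {beta..} g"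
  proof (rule monotone_onI)
    fix x y assume xy: "x \<in> {beta..}" "y \<in> {beta..}" "x < y"
    show "g x < g y"
    proof (rule DERIV_pos_imp_increasing_open[OF \<open>x < y\<close>])
      show "\<exists>l. (g has_real_derivative l) (at z) \<and> 0 < l" if "x < z" "z < y" for z
        using that xy \<open>0 \<le> beta\<close> deriv_at[of z] pos[of z] by auto
      show "continuous_on {x..y} g"
        using xy \<open>0 \<le> beta\<close> by (auto intro: continuous_on_subset[OF cont])
    qed
  qed
qed fact

lemma deriv_zero_at_sign_change:
  fixes f :: "real \<Rightarrow> real"
  assumes "isCont f b" "a < b"
    and neg: "\<And>x. a < x \<Longrightarrow> x < b \<Longrightarrow> f x < 0"
    and pos: "\<And>x. b < x \<Longrightarrow> 0 < f x"
  shows "f b = 0"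
proof (rule order.antisym)
  have "(f \<longlongrightarrow> f b) (at_left b)"
    using assms(1) by (simp add: isCont_def filterlim_at_split)
  moreover have "eventually (\<lambda>x. f x \<le> 0) (at_left b)"
    using eventually_at_left_real[OF \<open>a < b\<close>] by eventually_elim (auto intro: less_imp_le neg)
  ultimately show "f b \<le> 0"
    by (intro tendsto_upperbound) auto
  have "(f \<longlongrightarrow> f b) (at_right b)"
    using assms(1) by (simp add: isCont_def filterlim_at_split)
  moreover have "eventually (\<lambda>x. 0 \<le> f x) (at_right b)"
    using eventually_at_right_less[of b] by eventually_elim (auto intro: less_imp_le pos)
  ultimately show "0 \<le> f b"
    by (intro tendsto_lowerbound) auto
qed

section \<open>The planar system\<close>

locale wave_system = valley g beta
  for g :: "real \<Rightarrow> real" and beta :: real +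
  fixes g' :: "real \<Rightarrow> real" and um chi s dphi0 :: real and phi :: "real \<Rightarrow> real"
  assumes g_deriv: "\<And>v. 0 \<le> v \<Longrightarrow> (g has_real_derivative g' v) (at v within {0..})"
    and g_pos: "\<And>v. 0 \<le> v \<Longrightarrow> 0 < g v"
    and g'_neg: "\<And>v. 0 \<le> v \<Longrightarrow> v < beta \<Longrightarrow> g' v < 0"
    and g'_pos: "\<And>v. beta < v \<Longrightarrow> 0 < g' v"
    and g'_beta: "g' beta = 0"
    and phi_deriv: "(phi has_real_derivative dphi0) (at 0)"
    and chi_dphi0_pos: "0 < chi * dphi0"
    and speed: "chi * phi 0 < s"
begin

abbreviation E :: "(real \<times> real) set" where
  "E \<equiv> equilibria F1 (F2 g um chi phi s)"

abbreviation kind :: "(real \<times> real \<times> real \<times> real \<Rightarrow> bool) \<Rightarrow> real \<times> real \<Rightarrow> bool" where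
  "kind K \<equiv> eq_kind K F1 (F2 g um chi phi s)"

lemma F2_on_axis: "F2 g um chi phi s v 0 = g v - um"
  unfolding F2_def hfun_def using speed by simp

lemma equilibria_eq_level_set:
  "E = (\<lambda>v. (v, 0)) ` {v. 0 \<le> v \<and> g v = um}"
  unfolding equilibria_def F1_def using F2_on_axis by force

lemma has_jacobian_at_axis:
  assumes "0 \<le> v"
  shows "has_jacobian_at F1 (F2 g um chi phi s) v 0
           (0, 1, g' v, um * chi * dphi0 / (chi * phi 0 - s))"
  unfolding has_jacobian_at_def prod.case
proof (intro conjI)
  show "((\<lambda>x. F1 x 0) has_real_derivative 0) (at v within {0..})"
    and "(F1 v has_real_derivative 1) (at 0)"
    unfolding F1_def by simp_all
  show "((\<lambda>x. F2 g um chi phi s x 0) has_real_derivative g' v) (at v within {0..})"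
    unfolding F2_on_axis using g_deriv[OF assms] by (auto intro!: derivative_eq_intros)
  have "((\<lambda>w. - (um * (chi * phi 0 - s) / (chi * phi w - s)) + g v)
          has_real_derivative um * chi * dphi0 / (chi * phi 0 - s)) (at 0)"
    using speed by (auto intro!: derivative_eq_intros phi_deriv)
  then show "(F2 g um chi phi s v has_real_derivative um * chi * dphi0 / (chi * phi 0 - s)) (at 0)"
    unfolding F2_def hfun_def .
qed

lemma eq_kind_on_axis:
  assumes "0 \<le> v" "K (0, 1, g' v, um * chi * dphi0 / (chi * phi 0 - s))"
  shows "kind K (v, 0)"
  unfolding eq_kind_def fst_conv snd_conv using has_jacobian_at_axis[OF assms(1)] assms(2) by blast

lemma saddle_if_right_of_beta: "beta < v \<Longrightarrow> kind saddle_mat (v, 0)"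
  using beta_nonneg by (intro eq_kind_on_axis saddle_mat_companion g'_pos) auto

lemma nonhyperbolic_at_beta: "kind nonhyperbolic_mat (beta, 0)"
  using beta_nonneg g'_beta nonhyperbolic_mat_companion by (intro eq_kind_on_axis) auto

lemma stable_if_left_of_beta:
  assumes "0 \<le> v" "v < beta" "g v = um"
  shows "kind stable_focus_mat (v, 0) \<or> kind stable_node_mat (v, 0)"
proof -
  have "0 < um * (chi * dphi0)"
    using g_pos[OF assms(1)] assms(3) chi_dphi0_pos by simp
  then have "um * chi * dphi0 / (chi * phi 0 - s) < 0"
    using speed by (simp add: divide_pos_neg mult.assoc)
  then show ?thesis
    using stable_focus_or_node_companion[OF g'_neg[OF assms(1,2)]] assms(1)
    by (metis eq_kind_on_axis)
qed

lemma no_equilibrium: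
  "um < g beta \<or> (g 0 < um \<and> g_sup \<le> ereal um) \<Longrightarrow> E = {}"
  unfolding equilibria_eq_level_set using level_set_empty by simp

lemma equilibrium_at_min: "um = g beta \<Longrightarrow> E = {(beta, 0)}"
  unfolding equilibria_eq_level_set using level_set_at_min by simp

lemma one_equilibrium_left:
  assumes "um = g beta \<or> (g beta < um \<and> um \<le> g 0 \<and> g_sup \<le> ereal um)"
  shows "\<exists>v. E = {(v, 0)} \<and> v \<le> beta \<and>
    (kind stable_focus_mat (v, 0) \<or> kind stable_node_mat (v, 0) \<or> kind nonhyperbolic_mat (v, 0))"
  using assms
proof
  assume "um = g beta"
  then show ?thesis
    using equilibrium_at_min nonhyperbolic_at_beta by blast
next
  assume "g beta < um \<and> um \<le> g 0 \<and> g_sup \<le> ereal um"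
  then obtain v where "v < beta" and level: "{w. 0 \<le> w \<and> g w = um} = {v}"
    using level_set_left_only by blast
  moreover from level have "0 \<le> v" "g v = um" by auto
  ultimately show ?thesis
    using stable_if_left_of_beta unfolding equilibria_eq_level_set by fastforce
qed

lemma one_equilibrium_right:
  assumes "um = g beta \<or> (g 0 < um \<and> ereal um < g_sup)"
  shows "\<exists>v. E = {(v, 0)} \<and> beta \<le> v \<and> (kind saddle_mat (v, 0) \<or> kind nonhyperbolic_mat (v, 0))"
  using assms
proof
  assume "um = g beta"
  then show ?thesis
    using equilibrium_at_min nonhyperbolic_at_beta by blast
next
  assume "g 0 < um \<and> ereal um < g_sup"
  then obtain v where "beta < v" "{w. 0 \<le> w \<and> g w = um} = {v}"
    using level_set_right_only by blast
  then show ?thesis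
    using saddle_if_right_of_beta unfolding equilibria_eq_level_set by fastforce
qed

lemma two_equilibria:
  assumes "g beta < um" "um \<le> g 0" "ereal um < g_sup"
  shows "\<exists>vp vm. E = {(vp, 0), (vm, 0)} \<and> 0 \<le> vp \<and> vp < beta \<and> beta < vm \<and>
    um = g vp \<and> um = g vm \<and>
    kind saddle_mat (vm, 0) \<and> (kind stable_focus_mat (vp, 0) \<or> kind stable_node_mat (vp, 0))"
proof -
  obtain vp vm where "vp < beta" "beta < vm" and level: "{w. 0 \<le> w \<and> g w = um} = {vp, vm}"
    using level_set_two[OF assms] .
  moreover from level have "0 \<le> vp" "g vp = um" "g vm = um" by auto
  ultimately show ?thesis
    using saddle_if_right_of_beta stable_if_left_of_beta unfolding equilibria_eq_level_set
    by (intro exI[of _ vp] exI[of _ vm]) auto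
qed

lemma two_equilibria_interior:
  assumes "g beta < um" "um < g 0" "ereal um < g_sup"
  shows "\<exists>vp vm. E = {(vp, 0), (vm, 0)} \<and> 0 < vp \<and> vp < beta \<and> beta < vm \<and>
    um = g vp \<and> um = g vm \<and>
    kind saddle_mat (vm, 0) \<and> (kind stable_focus_mat (vp, 0) \<or> kind stable_node_mat (vp, 0))"
proof -
  have "vp \<noteq> 0" if "um = g vp" for vp
    using that assms(2) by auto
  with two_equilibria[OF assms(1) less_imp_le[OF assms(2)] assms(3)] show ?thesis
    by (metis order.not_eq_order_implies_strict)
qed

end

theorem proposition2p6:
  fixes chi s um beta :: real and phi phi' g g' :: "real \<Rightarrow> real" and ginf :: ereal
  assumes chi_pos: "chi > 0"
    and phi_deriv: "\<And>x. (phi has_real_derivative phi' x) (at x)"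
    and phi'_cont: "continuous_on UNIV phi'"
    and phi'_pos: "\<And>x. phi' x > 0"
    and phi0_pos: "phi 0 > 0"
    and s_gt: "s > chi * phi 0"
    and um_nonneg: "um \<ge> 0"
    and g_deriv: "\<And>v. v \<ge> 0 \<Longrightarrow> (g has_real_derivative g' v) (at v within {0..})"
    and g'_cont: "continuous_on {0..} g'"
    and g_pos: "\<And>v. v \<ge> 0 \<Longrightarrow> g v > 0"
    and beta_pos: "beta > 0"
    and g'_neg: "\<And>v. 0 \<le> v \<Longrightarrow> v < beta \<Longrightarrow> g' v < 0"
    and g'_pos: "\<And>v. v > beta \<Longrightarrow> g' v > 0"
    and ginf_def: "ginf = Lim at_top (\<lambda>V. ereal (g V))"
  shows
   "let P = F1; Q = F2 g um chi phi s; E = equilibria P Q;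
        saddle = eq_kind saddle_mat P Q; node = eq_kind stable_node_mat P Q;
        focus = eq_kind stable_focus_mat P Q; nonhyp = eq_kind nonhyperbolic_mat P Q
    in
    (ginf < ereal (g 0) \<longrightarrow>
       ((um < g beta \<or> um > g 0) \<longrightarrow> E = {}) \<and>
       ((um = g beta \<or> (ginf < ereal um \<and> um < g 0)) \<longrightarrow>
          (\<exists>v. E = {(v, 0)} \<and> v \<le> beta \<and> (focus (v, 0) \<or> node (v, 0) \<or> nonhyp (v, 0)))) \<and>
       ((g beta < um \<and> ereal um < ginf) \<longrightarrow>
          (\<exists>vp vm. E = {(vp, 0), (vm, 0)} \<and> 0 < vp \<and> vp < beta \<and> beta < vm \<and>
             um = g vp \<and> um = g vm \<and> saddle (vm, 0) \<and> (focus (vp, 0) \<or> node (vp, 0))))) \<and>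
    (ginf > ereal (g 0) \<longrightarrow>
       ((um < g beta \<or> ereal um \<ge> ginf) \<longrightarrow> E = {}) \<and>
       ((um = g beta \<or> (g 0 < um \<and> ereal um < ginf)) \<longrightarrow>
          (\<exists>v. E = {(v, 0)} \<and> v \<ge> beta \<and> (saddle (v, 0) \<or> nonhyp (v, 0)))) \<and>
       ((g beta < um \<and> um \<le> g 0) \<longrightarrow>
          (\<exists>vp vm. E = {(vp, 0), (vm, 0)} \<and> 0 \<le> vp \<and> vp < beta \<and> beta < vm \<and>
             um = g vp \<and> um = g vm \<and> saddle (vm, 0) \<and> (focus (vp, 0) \<or> node (vp, 0))))) \<and>
    (ginf = ereal (g 0) \<longrightarrow>
       ((um < g beta \<or> um > g 0) \<longrightarrow> E = {}) \<and>
       (um = g beta \<longrightarrow> E = {(beta, 0)} \<and> nonhyp (beta, 0)) \<and>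
       ((g beta < um \<and> um < g 0) \<longrightarrow>
          (\<exists>vp vm. E = {(vp, 0), (vm, 0)} \<and> 0 < vp \<and> vp < beta \<and> beta < vm \<and>
             um = g vp \<and> um = g vm \<and> saddle (vm, 0) \<and> (focus (vp, 0) \<or> node (vp, 0)))))"
proof -
  have "valley g beta"
    using valley_if_deriv_sign[OF less_imp_le[OF beta_pos] g_deriv g'_neg g'_pos] .
  then interpret valley g beta .
  have "continuous_on {0<..} g'"
    using g'_cont by (rule continuous_on_subset) auto
  then have "isCont g' beta"
    using beta_pos by (simp add: continuous_on_eq_continuous_at)
  then have "g' beta = 0"
    using beta_pos g'_neg g'_pos by (intro deriv_zero_at_sign_change[where a = 0]) auto
  then interpret wave_system g beta g' um chi s "phi' 0" phi
    using g_deriv g_pos g'_neg g'_pos phi_deriv chi_pos phi'_pos[of 0] s_gt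
    by unfold_locales auto
  have ginf: "ginf = g_sup"
    using ginf_def Lim_at_top_eq_g_sup by simp
  have "ereal (g beta) < g_sup"
    using less_g_sup by simp
  \<comment> \<open>Splitting \<open>g_sup\<close> into a real number or \<open>\<infinity>\<close> turns the comparisons in
    \<open>ereal\<close> into linear arithmetic.\<close>
  then show ?thesis
    unfolding Let_def ginf
    apply (intro conjI impI)
    subgoal by (cases g_sup) (auto intro!: no_equilibrium)
    subgoal by (rule one_equilibrium_left) (cases g_sup; auto)
    subgoal by (rule two_equilibria_interior) (cases g_sup; auto)+
    subgoal by (cases g_sup) (auto intro!: no_equilibrium)
    subgoal by (rule one_equilibrium_right)
    subgoal by (rule two_equilibria) (cases g_sup; auto)+
    subgoal by (cases g_sup) (auto intro!: no_equilibrium)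
    subgoal using equilibrium_at_min by simp
    subgoal using nonhyperbolic_at_beta by simp
    subgoal by (rule two_equilibria_interior) (cases g_sup; auto)+
    done
qed

end
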